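(* Let $\mathcal{P}$ be a bidirected 1-dimensional PVASS, $k\in\mathbb{N}$, and $p,q$ states with $\gamma_k(p,q)=(a,b)$. If there exists a path $P\in\mathrm{Paths}(p,q)_k$ with $w(P)>b$, then $\delta_k(p)\ge m(P)$.
   Context: A 1-dimensional PVASS $\mathcal{P}=(Q,\Gamma,T)$ has transitions $(p,v,\alpha,q)$ with $v\in\mathbb{Z}$, $\alpha\in\{a,\bar a\mid a\in\Gamma\}\cup\{\varepsilon\}$; it is bidirected if $(p,v,\alpha,q)\in T$ implies $(q,-v,\bar\alpha,p)\in T$ ($\bar{\bar a}=a$, $\bar\varepsilon=\varepsilon$). The one-step $\mathbb{Z}$-relation $\hookrightarrow$ on $Q\times\mathbb{Z}\times\Gamma^*$ is defined like the usual step relation (push $\alpha\in\Gamma$, pop $\bar a$ when the top is $a$, add $v$ to the counter) but without requiring the counter to stay nonnegative. A path from $p$ to $q$ is a start state $p$ together with a sequence of transitions inducing a $\hookrightarrow$-run $(p_1,x_1,w_1)\hookrightarrow\dots\hookrightarrow(p_j,x_j,w_j)$ with $p_1=p$, $p_j=q$, $x_1=0$, $w_1=w_j=\varepsilon$. For such $P$: $\mathit{MaxSH}(P)=\max_i|w_i|$, $w(P)=x_j$, $m(P)=\min_i x_i$ ($\le0$). $\mathrm{Paths}(p,q)_k$ is the set of paths from $p$ to $q$ with $\mathit{MaxSH}\le k$. Define $\gamma_k(p,q)=(a,b)$ with $a=\max\{m(P)\mid P\in\mathrm{Paths}(p,q)_k\}$ and $b=\sup\{w(P)\mid P\in\mathrm{Paths}(p,q)_k,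 m(P)=a\}$, where $\max\emptyset=\sup\emptyset=-\infty$ and $b$ may be $\omega$ (i.e.\ $+\infty$). Define $\delta_k(p)=\max\{m(P)\mid P\in\mathrm{Paths}(p,p)_k,\ w(P)>0\}$ (with $\max\emptyset=-\infty$). *)

theory Defs
  imports Main "HOL-Library.Extended_Real"
begin

datatype 'g sop = Push 'g | Pop 'g | Eps

fun bar :: "'g sop \<Rightarrow> 'g sop" where
  "bar (Push a) = Pop a"
| "bar (Pop a) = Push a"
| "bar Eps = Eps"

type_synonym ('q,'g) trans = "'q \<times> int \<times> 'g sop \<times> 'q"
type_synonym ('q,'g) conf = "'q \<times> int \<times> 'g list"   (* stack: top = head *)

definition pvass :: "'q set \<Rightarrow> 'g set \<Rightarrow> ('q,'g) trans set \<Rightarrow> bool" where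
  "pvass Q G T \<longleftrightarrow> finite Q \<and> finite G \<and> finite T \<and>
     (\<forall>(p,v,\<alpha>,q)\<in>T. p \<in> Q \<and> q \<in> Q \<and>
        (\<forall>a. (\<alpha> = Push a \<or> \<alpha> = Pop a) \<longrightarrow> a \<in> G))"

definition bidirected :: "('q,'g) trans set \<Rightarrow> bool" where
  "bidirected T \<longleftrightarrow> (\<forall>p v \<alpha> q. (p,v,\<alpha>,q) \<in> T \<longrightarrow> (q,-v,bar \<alpha>,p) \<in> T)"

(* the one-step Z-relation (counter may become negative) *)
fun zstep :: "('q,'g) conf \<Rightarrow> ('q,'g) trans \<Rightarrow> ('q,'g) conf option" where
  "zstep (s,x,w) (p,v,Push a,q) = (if s = p then Some (q, x+v, a#w) else None)"
| "zstep (s,x,w) (p,v,Pop a,q) =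
     (if s = p \<and> w \<noteq> [] \<and> hd w = a then Some (q, x+v, tl w) else None)"
| "zstep (s,x,w) (p,v,Eps,q) = (if s = p then Some (q, x+v, w) else None)"

fun zrun :: "('q,'g) conf \<Rightarrow> ('q,'g) trans list \<Rightarrow> ('q,'g) conf list option" where
  "zrun c [] = Some [c]"
| "zrun c (t#ts) = (case zstep c t of None \<Rightarrow> None
                     | Some c' \<Rightarrow> map_option (\<lambda>cs. c # cs) (zrun c' ts))"

type_synonym ('q,'g) path = "'q \<times> ('q,'g) trans list"

definition confs :: "('q,'g) path \<Rightarrow> ('q,'g) conf list" where
  "confs P = the (zrun (fst P, 0, []) (snd P))"

definition is_path :: "('q,'g) trans set \<Rightarrow> 'q \<Rightarrow> 'q \<Rightarrow> ('q,'g) path \<Rightarrow> bool" where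
  "is_path T p q P \<longleftrightarrow> fst P = p \<and> set (snd P) \<subseteq> T \<and>
     (\<exists>cs. zrun (p, 0, []) (snd P) = Some cs \<and> fst (last cs) = q \<and> snd (snd (last cs)) = [])"

definition MaxSH :: "('q,'g) path \<Rightarrow> nat" where
  "MaxSH P = Max (set (map (\<lambda>c. length (snd (snd c))) (confs P)))"

definition wt :: "('q,'g) path \<Rightarrow> int" where
  "wt P = fst (snd (last (confs P)))"

definition mn :: "('q,'g) path \<Rightarrow> int" where
  "mn P = Min (set (map (\<lambda>c. fst (snd c)) (confs P)))"

definition Paths :: "('q,'g) trans set \<Rightarrow> 'q \<Rightarrow> 'q \<Rightarrow> nat \<Rightarrow> ('q,'g) path set" where
  "Paths T p q k = {P. is_path T p q P \<and> MaxSH P \<le> k}"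

(* max / sup over sets of integers, taken in ereal, with max/sup of {} = -\<infinity>;
   for the first component the Sup is attained (bounded above by 0), so it is the max *)
definition gamma :: "('q,'g) trans set \<Rightarrow> nat \<Rightarrow> 'q \<Rightarrow> 'q \<Rightarrow> ereal \<times> ereal" where
  "gamma T k p q =
    (let a = Sup {ereal (mn P) | P. P \<in> Paths T p q k}
     in (a, Sup {ereal (wt P) | P. P \<in> Paths T p q k \<and> ereal (mn P) = a}))"

definition delta :: "('q,'g) trans set \<Rightarrow> nat \<Rightarrow> 'q \<Rightarrow> ereal" where
  "delta T k p = Sup {ereal (mn P) | P. P \<in> Paths T p p k \<and> wt P > 0}"

end

theory Submission
  imports Defs
begin

(* Let R be a path from p to q whose minimum counter value is the maximal one, a; it exists
   because minima of paths are nonpositive integers (so no finiteness of the PVASS is needed).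
   Then m(P) <= m(R), and w(R) <= b < w(P). By bidirectedness R can be run backwards from q,
   undoing its counter changes and its stack operations. Following P and then R backwards gives
   a cycle at p of weight w(P) - w(R) > 0 with stack height at most k, along which the counter
   never drops below min (m(P)) (m(R) + w(P) - w(R)) >= m(P). *)

definition reverse_trans :: "('q,'g) trans \<Rightarrow> ('q,'g) trans" where
  "reverse_trans = (\<lambda>(p, v, \<alpha>, q). (q, -v, bar \<alpha>, p))"

definition shift_conf :: "int \<Rightarrow> ('q,'g) conf \<Rightarrow> ('q,'g) conf" where
  "shift_conf d = (\<lambda>(s, x, w). (s, x + d, w))"

definition path_append :: "('q,'g) path \<Rightarrow> ('q,'g) path \<Rightarrow> ('q,'g) path" where
  "path_append P R = (fst P, snd P @ snd R)"

definition path_reverse :: "'q \<Rightarrow> ('q,'g) path \<Rightarrow> ('q,'g) path" where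
  "path_reverse q P = (q, rev (map reverse_trans (snd P)))"

lemma shift_conf_simps [simp]:
  "fst (shift_conf d c) = fst c"
  "fst (snd (shift_conf d c)) = fst (snd c) + d"
  "snd (snd (shift_conf d c)) = snd (snd c)"
  by (cases c; simp add: shift_conf_def)+

lemma zstep_reverse_trans:
  assumes "zstep c t = Some c'"
  shows "zstep c' (reverse_trans t) = Some c"
proof -
  obtain p v \<alpha> q where "t = (p, v, \<alpha>, q)" by (cases t) auto
  with assms show ?thesis
    by (cases c; cases \<alpha>) (auto simp: reverse_trans_def split: if_splits)
qed

lemma zstep_shift_conf: "zstep (shift_conf d c) t = map_option (shift_conf d) (zstep c t)"
proof -
  obtain p v \<alpha> q where "t = (p, v, \<alpha>, q)" by (cases t) auto
  then show ?thesis by (cases c; cases \<alpha>) (auto simp: shift_conf_def)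
qed

lemma zrun_shift_conf: "zrun (shift_conf d c) ts = map_option (map (shift_conf d)) (zrun c ts)"
  by (induction ts arbitrary: c)
    (auto simp: zstep_shift_conf option.map_comp comp_def split: option.splits)

lemma zrun_SomeD: "zrun c ts = Some cs \<Longrightarrow> cs \<noteq> [] \<and> hd cs = c"
  by (induction ts arbitrary: c cs) (auto split: option.splits)

lemma zrun_append:
  "zrun c ts\<^sub>1 = Some cs\<^sub>1 \<Longrightarrow> zrun (last cs\<^sub>1) ts\<^sub>2 = Some cs\<^sub>2 \<Longrightarrow>
   zrun c (ts\<^sub>1 @ ts\<^sub>2) = Some (cs\<^sub>1 @ tl cs\<^sub>2)"
proof (induction ts\<^sub>1 arbitrary: c cs\<^sub>1)
  case Nil
  then show ?case using zrun_SomeD[OF Nil(2)] by (cases cs\<^sub>2) auto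
next
  case (Cons t ts)
  then obtain c' cs where "zstep c t = Some c'" "zrun c' ts = Some cs" "cs\<^sub>1 = c # cs"
    by (auto split: option.splits)
  with Cons show ?case using zrun_SomeD[of c' ts cs] by auto
qed

lemma zrun_reverse:
  "zrun c ts = Some cs \<Longrightarrow> zrun (last cs) (rev (map reverse_trans ts)) = Some (rev cs)"
proof (induction ts arbitrary: c cs)
  case Nil
  then show ?case by auto
next
  case (Cons t ts)
  then obtain c' cs' where step: "zstep c t = Some c'" and run: "zrun c' ts = Some cs'"
    and cs: "cs = c # cs'"
    by (auto split: option.splits)
  have "cs' \<noteq> []" "last (rev cs') = c'"
    using zrun_SomeD[OF run] by (auto simp: last_rev)
  moreover have "zrun c' [reverse_trans t] = Some [c', c]"
    using zstep_reverse_trans[OF step] by simp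
  ultimately show ?case
    using zrun_append[OF Cons.IH[OF run]] cs by simp
qed

lemma last_append_tl: "ys \<noteq> [] \<Longrightarrow> hd ys = last xs \<Longrightarrow> last (xs @ tl ys) = last ys"
  by (cases ys) (auto simp: last_append)

lemma set_append_tl:
  "xs \<noteq> [] \<Longrightarrow> ys \<noteq> [] \<Longrightarrow> hd ys = last xs \<Longrightarrow> set (xs @ tl ys) = set xs \<union> set ys"
  by (cases ys) auto

lemma is_pathD:
  assumes "is_path T p q P"
  shows "fst P = p" and "set (snd P) \<subseteq> T" and "zrun (p, 0, []) (snd P) = Some (confs P)"
    and "confs P \<noteq> []" and "hd (confs P) = (p, 0, [])" and "last (confs P) = (q, wt P, [])"
proof -
  from assms obtain cs where run: "zrun (p, 0, []) (snd P) = Some cs"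
    and "fst (last cs) = q" "snd (snd (last cs)) = []"
    and "fst P = p" "set (snd P) \<subseteq> T"
    unfolding is_path_def by auto
  moreover have "confs P = cs" using run \<open>fst P = p\<close> by (simp add: confs_def)
  ultimately show "fst P = p" "set (snd P) \<subseteq> T" "zrun (p, 0, []) (snd P) = Some (confs P)"
    "confs P \<noteq> []" "hd (confs P) = (p, 0, [])" "last (confs P) = (q, wt P, [])"
    using zrun_SomeD[OF run] by (auto simp: wt_def prod_eq_iff)
qed

lemma is_pathI:
  "fst P = p \<Longrightarrow> set (snd P) \<subseteq> T \<Longrightarrow> zrun (p, 0, []) (snd P) = Some cs \<Longrightarrow>
   last cs = (q, x, []) \<Longrightarrow> is_path T p q P"
  by (auto simp: is_path_def)

lemma confs_eqI: "zrun (fst P, 0, []) (snd P) = Some cs \<Longrightarrow> confs P = cs"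
  by (simp add: confs_def)

lemma mn_eq_Min: "mn P = Min ((\<lambda>c. fst (snd c)) ` set (confs P))"
  by (simp add: mn_def)

lemma MaxSH_eq_Max: "MaxSH P = Max ((\<lambda>c. length (snd (snd c))) ` set (confs P))"
  by (simp add: MaxSH_def)

lemma mn_nonpos: "is_path T p q P \<Longrightarrow> mn P \<le> 0"
  using is_pathD(4,5)[of T p q P] hd_in_set[of "confs P"]
  by (force simp: mn_eq_Min intro: Min_le)

lemma
  assumes P: "is_path T p q P" and R: "is_path T q r R"
  shows is_path_path_append: "is_path T p r (path_append P R)"
    and wt_path_append: "wt (path_append P R) = wt P + wt R"
    and confs_path_append:
      "confs (path_append P R) = confs P @ tl (map (shift_conf (wt P)) (confs R))"
proof -
  have "zrun (last (confs P)) (snd R) = Some (map (shift_conf (wt P)) (confs R))"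
    using zrun_shift_conf[of "wt P" "(q, 0, [])" "snd R"] is_pathD(3,6)[OF P] is_pathD(3)[OF R]
    by (simp add: shift_conf_def)
  then have run: "zrun (p, 0, []) (snd (path_append P R))
      = Some (confs P @ tl (map (shift_conf (wt P)) (confs R)))"
    using zrun_append is_pathD(3)[OF P] by (simp add: path_append_def)
  then show "confs (path_append P R) = confs P @ tl (map (shift_conf (wt P)) (confs R))"
    using is_pathD(1)[OF P] by (simp add: confs_eqI path_append_def)
  have "last (confs P @ tl (map (shift_conf (wt P)) (confs R))) = (r, wt P + wt R, [])"
    using is_pathD(4-6)[OF P] is_pathD(4-6)[OF R]
    by (subst last_append_tl) (auto simp: hd_map last_map shift_conf_def)
  then show "wt (path_append P R) = wt P + wt R"
    using \<open>confs (path_append P R) = _\<close> by (simp add: wt_def)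
  from \<open>last _ = _\<close> show "is_path T p r (path_append P R)"
    using run is_pathD(1,2)[OF P] is_pathD(2)[OF R]
    by (intro is_pathI) (auto simp: path_append_def)
qed

lemma
  assumes "bidirected T" and P: "is_path T p q P"
  shows is_path_path_reverse: "is_path T q p (path_reverse q P)"
    and wt_path_reverse: "wt (path_reverse q P) = - wt P"
    and confs_path_reverse: "confs (path_reverse q P) = map (shift_conf (- wt P)) (rev (confs P))"
proof -
  have "zrun (q, wt P, []) (snd (path_reverse q P)) = Some (rev (confs P))"
    using zrun_reverse[OF is_pathD(3)[OF P]] is_pathD(6)[OF P] by (simp add: path_reverse_def)
  then have run: "zrun (q, 0, []) (snd (path_reverse q P))
      = Some (map (shift_conf (- wt P)) (rev (confs P)))"
    using zrun_shift_conf[of "- wt P" "(q, wt P, [])" "snd (path_reverse q P)"]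
    by (simp add: shift_conf_def)
  then show "confs (path_reverse q P) = map (shift_conf (- wt P)) (rev (confs P))"
    by (simp add: confs_eqI path_reverse_def)
  have "set (snd (path_reverse q P)) \<subseteq> T"
    using is_pathD(2)[OF P] \<open>bidirected T\<close>
    by (auto simp: path_reverse_def reverse_trans_def bidirected_def)
  moreover have last: "last (map (shift_conf (- wt P)) (rev (confs P))) = (p, - wt P, [])"
    using is_pathD(4,5)[OF P] by (simp add: last_map last_rev shift_conf_def)
  ultimately show "is_path T q p (path_reverse q P)"
    using run by (intro is_pathI) (auto simp: path_reverse_def)
  show "wt (path_reverse q P) = - wt P"
    using last \<open>confs (path_reverse q P) = _\<close> by (simp add: wt_def)
qed

lemma set_confs_path_append:
  assumes "is_path T p q P" and "is_path T q r R"
  shows "set (confs (path_append P R)) = set (confs P) \<union> shift_conf (wt P) ` set (confs R)"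
  unfolding confs_path_append[OF assms]
  using is_pathD(4-6)[OF assms(1)] is_pathD(4,5)[OF assms(2)]
  by (subst set_append_tl) (auto simp: hd_map shift_conf_def)

lemma mn_path_append:
  assumes "is_path T p q P" and "is_path T q r R"
  shows "mn (path_append P R) = min (mn P) (mn R + wt P)"
  using is_pathD(4)[OF assms(1)] is_pathD(4)[OF assms(2)]
  by (simp add: mn_eq_Min set_confs_path_append[OF assms] image_Un Min_Un image_image
      Min_add_commute)

lemma MaxSH_path_append:
  assumes "is_path T p q P" and "is_path T q r R"
  shows "MaxSH (path_append P R) = max (MaxSH P) (MaxSH R)"
  using is_pathD(4)[OF assms(1)] is_pathD(4)[OF assms(2)]
  by (simp add: MaxSH_eq_Max set_confs_path_append[OF assms] image_Un Max_Un image_image)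

lemma mn_path_reverse:
  assumes "bidirected T" and "is_path T p q P"
  shows "mn (path_reverse q P) = mn P - wt P"
  using is_pathD(4)[OF assms(2)] Min_add_commute[of "set (confs P)" "\<lambda>c. fst (snd c)" "- wt P"]
  by (simp add: mn_eq_Min confs_path_reverse[OF assms] image_image)

lemma MaxSH_path_reverse:
  assumes "bidirected T" and "is_path T p q P"
  shows "MaxSH (path_reverse q P) = MaxSH P"
  by (simp add: MaxSH_eq_Max confs_path_reverse[OF assms] image_image)

lemma delta_ge_mn_path_append_reverse:
  assumes "bidirected T" and P: "P \<in> Paths T p q k" and R: "R \<in> Paths T p q k"
    and "wt R < wt P"
  shows "ereal (min (mn P) (mn R + (wt P - wt R))) \<le> delta T k p"
proof -
  have paths: "is_path T p q P" "is_path T p q R" "MaxSH P \<le> k" "MaxSH R \<le> k"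
    using P R by (auto simp: Paths_def)
  have R': "is_path T q p (path_reverse q R)"
    using is_path_path_reverse[OF \<open>bidirected T\<close> paths(2)] .
  define C where "C = path_append P (path_reverse q R)"
  have "is_path T p p C"
    using is_path_path_append[OF paths(1) R'] by (simp add: C_def)
  moreover have "MaxSH C \<le> k"
    using paths MaxSH_path_append[OF paths(1) R'] MaxSH_path_reverse[OF \<open>bidirected T\<close> paths(2)]
    by (simp add: C_def)
  moreover have "wt C = wt P - wt R"
    using wt_path_append[OF paths(1) R'] wt_path_reverse[OF \<open>bidirected T\<close> paths(2)]
    by (simp add: C_def)
  moreover have "mn C = min (mn P) (mn R + (wt P - wt R))"
    using mn_path_append[OF paths(1) R'] mn_path_reverse[OF \<open>bidirected T\<close> paths(2)]
    by (simp add: C_def)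
  ultimately have "C \<in> Paths T p p k" "0 < wt C" "mn C = min (mn P) (mn R + (wt P - wt R))"
    using \<open>wt R < wt P\<close> by (auto simp: Paths_def)
  then show ?thesis
    unfolding delta_def by (intro Sup_upper) (metis (mono_tags, lifting) mem_Collect_eq)
qed

lemma Paths_ex_max_mn:
  assumes "P \<in> Paths T p q k"
  obtains R where "R \<in> Paths T p q k" and "\<And>P'. P' \<in> Paths T p q k \<Longrightarrow> mn P' \<le> mn R"
proof -
  obtain R where R: "R \<in> Paths T p q k"
    and least: "\<And>P'. P' \<in> Paths T p q k \<Longrightarrow> nat (- mn R) \<le> nat (- mn P')"
    using ex_has_least_nat[of "\<lambda>P'. P' \<in> Paths T p q k" P "\<lambda>R. nat (- mn R)", OF assms] by blast
  have "mn P' \<le> mn R" if "P' \<in> Paths T p q k" for P'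
    using least[OF that] mn_nonpos[of T p q P'] that by (simp add: Paths_def)
  with R show ?thesis by (rule that)
qed

lemma fst_gamma_eq_max_mn:
  assumes "R \<in> Paths T p q k" and "\<And>P'. P' \<in> Paths T p q k \<Longrightarrow> mn P' \<le> mn R"
  shows "fst (gamma T k p q) = ereal (mn R)"
  unfolding gamma_def Let_def fst_conv
proof (rule Sup_eqI)
  fix x assume "x \<in> {ereal (mn P) |P. P \<in> Paths T p q k}"
  then show "x \<le> ereal (mn R)" using assms(2) by auto
next
  fix y assume "\<And>x. x \<in> {ereal (mn P) |P. P \<in> Paths T p q k} \<Longrightarrow> x \<le> y"
  then show "ereal (mn R) \<le> y" using assms(1) by blast
qed

lemma wt_le_snd_gamma:
  assumes "R \<in> Paths T p q k" and "ereal (mn R) = fst (gamma T k p q)"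
  shows "ereal (wt R) \<le> snd (gamma T k p q)"
  using assms unfolding gamma_def Let_def fst_conv snd_conv by (intro Sup_upper) blast

theorem lemma21:
  fixes Q :: "'q set" and G :: "'g set" and T :: "('q,'g) trans set"
    and k :: nat and p q :: 'q and a b :: ereal and P :: "('q,'g) path"
  assumes "pvass Q G T" and "bidirected T"
    and "p \<in> Q" and "q \<in> Q"
    and "gamma T k p q = (a, b)"
    and "P \<in> Paths T p q k" and "ereal (wt P) > b"
  shows "delta T k p \<ge> ereal (mn P)"
proof -
  obtain R where R: "R \<in> Paths T p q k"
    and max: "\<And>P'. P' \<in> Paths T p q k \<Longrightarrow> mn P' \<le> mn R"
    using Paths_ex_max_mn[OF assms(6)] by blast
  have "ereal (wt R) \<le> b"
    using wt_le_snd_gamma[OF R] fst_gamma_eq_max_mn[OF R max] assms(5) by simp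
  then have "ereal (wt R) < ereal (wt P)"
    using assms(7) by (rule le_less_trans)
  then have "wt R < wt P" by simp
  then have "ereal (min (mn P) (mn R + (wt P - wt R))) \<le> delta T k p"
    using delta_ge_mn_path_append_reverse[OF assms(2,6) R] by blast
  moreover have "mn P \<le> min (mn P) (mn R + (wt P - wt R))"
    using max[OF assms(6)] \<open>wt R < wt P\<close> by linarith
  ultimately show ?thesis by (meson order_trans ereal_less_eq(3) of_int_le_iff)
qed

end
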